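(* Let $\alpha,\beta\in(0,1)$ with $\alpha\ne\beta$, and set $x=[\alpha N]$, $y=[\beta N]$. (i) For the symmetric walk and for the weakly asymmetric walk (any fixed $c>0$), $$\lim_{N\to\infty}P_x\big(G(y)\equiv1\ (\mathrm{mod}\ 2)\,\big|\,T_y<T_N<T_0\big)=\lim_{N\to\infty}P_x\big(G(y)\equiv1\ (\mathrm{mod}\ 2)\,\big|\,T_y<T_0<T_N\big)=\frac12,$$ and consequently $\lim_{N\to\infty}P_x\big(G(y)\equiv1\ (\mathrm{mod}\ 2)\,\big|\,T_y<\tau_N\big)=\frac12$. (ii) For the asymmetric walk with fixed $q<p$ and $\alpha<\beta$, $$\lim_{N\to\infty}P_x\big(G(y)\equiv1\ (\mathrm{mod}\ 2)\big)=\frac{1}{2-(p-q)}.$$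
   Context: Let $\mathcal T_N=\{0,\dots,N\}$ and let $(X_n)$ be a nearest-neighbour random walk on $\mathcal T_N$ stepping right with probability $p_N$ and left with probability $q_N=1-p_N$, independently, stopped the first time it is at $0$ or $N$. $P_x$ denotes the law with $X_0=x$. The walk is called: - symmetric if $p_N=q_N=1/2$; - weakly asymmetric (fixed $c>0$) if $q_N=1/2-c/N$ and $p_N=1/2+c/N$; - asymmetric if $p_N=p$ and $q_N=q$ are fixed with $p+q=1$ and $q<p$. $T_a=\inf\{n\ge1:X_n=a\}$, $\tau_N=T_0\wedge T_N$, and $G(y)=\sum_{k=0}^{\tau_N}\mathbf 1\{X_k=y\}$ is the number of visits to $y$ before exit. $[\cdot]$ is the integer part. *)

theory Defs
  imports "HOL-Probability.Probability"
begin

text \<open>The walk is driven by an i.i.d. sequence of Bernoulli(p) coin flips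
  (True = step right, probability p; False = step left, probability 1-p).\<close>

definition walk_space :: "real \<Rightarrow> bool stream measure" where
  "walk_space p = stream_space (measure_pmf (bernoulli_pmf p))"

fun rw :: "nat \<Rightarrow> nat \<Rightarrow> bool stream \<Rightarrow> nat \<Rightarrow> nat" where
  "rw N x \<omega> 0 = x"
| "rw N x \<omega> (Suc n) =
     (let z = rw N x \<omega> n in
      if z = 0 \<or> z = N then z else if \<omega> !! n then z + 1 else z - 1)"

definition hit :: "nat \<Rightarrow> nat \<Rightarrow> bool stream \<Rightarrow> nat \<Rightarrow> enat" where
  "hit N x \<omega> a =
     (if \<exists>n\<ge>1. rw N x \<omega> n = a then enat (LEAST n. n \<ge> 1 \<and> rw N x \<omega> n = a) else \<infinity>)"

definition exit_time :: "nat \<Rightarrow> nat \<Rightarrow> bool stream \<Rightarrow> enat" where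
  "exit_time N x \<omega> = min (hit N x \<omega> 0) (hit N x \<omega> N)"

text \<open>G(y): number of k with 0 \<le> k \<le> tau_N and X_k = y
  (tau_N is almost surely finite).\<close>
definition visits :: "nat \<Rightarrow> nat \<Rightarrow> bool stream \<Rightarrow> nat \<Rightarrow> nat" where
  "visits N x \<omega> y = card {k. enat k \<le> exit_time N x \<omega> \<and> rw N x \<omega> k = y}"

definition prob_of :: "'a measure \<Rightarrow> ('a \<Rightarrow> bool) \<Rightarrow> real" where
  "prob_of M A = measure M {\<omega> \<in> space M. A \<omega>}"

definition walk_cond_prob :: "'a measure \<Rightarrow> ('a \<Rightarrow> bool) \<Rightarrow> ('a \<Rightarrow> bool) \<Rightarrow> real" where
  "walk_cond_prob M A B = prob_of M (\<lambda>\<omega>. A \<omega> \<and> B \<omega>) / prob_of M B"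

definition ipart :: "real \<Rightarrow> nat \<Rightarrow> nat" where
  "ipart a N = nat \<lfloor>a * real N\<rfloor>"

end

theory Submission
  imports Defs
begin

text \<open>Fix the site \<open>y\<close> whose visits are counted, and for \<open>K \<subseteq> {0, N}\<close> consider the
  probabilities, as functions of the starting point, of being absorbed in \<open>K\<close> after an odd
  number of visits to \<open>y\<close>, after at least one visit, and at all. Away from \<open>y\<close> the first two
  are harmonic for the walk and vanish at \<open>0\<close> and \<open>N\<close>, so both are multiples of one and the
  same function of the starting point (explicit in terms of the scale function
  \<open>\<Sum>j<k. (q/p)^j\<close>); hence their ratio at \<open>x\<close> equals their ratio at \<open>y\<close>. A first step
  out of \<open>y\<close> flips the parity of the number of remaining visits, which gives
  \<open>P\<^sub>y(odd, absorbed in K) (1 + r) = P\<^sub>y(absorbed in K)\<close>, \<open>r\<close> being the probability of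
  returning to \<open>y\<close> before exiting. So every conditional probability in (i) equals \<open>1/(1 + r)\<close>.
  When \<open>p\<^sub>N \<rightarrow> 1/2\<close> the scale function diverges on both sides of \<open>y\<close>, so \<open>r \<rightarrow> 1\<close>. For
  fixed \<open>q < p\<close> and \<open>x < y\<close> one has \<open>P\<^sub>x(odd) = P\<^sub>x(T\<^sub>y < \<tau>\<^sub>N) / (1 + r)\<close> with
  \<open>P\<^sub>x(T\<^sub>y < \<tau>\<^sub>N) \<rightarrow> 1\<close> and \<open>r \<rightarrow> p (q/p) + q = 2q\<close>.\<close>

section \<open>Paths of the stopped walk\<close>

definition step :: "nat \<Rightarrow> nat \<Rightarrow> bool \<Rightarrow> nat" where
  "step N z b = (if z = 0 \<or> z = N then z else if b then z + 1 else z - 1)"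

lemma step_interior [simp]:
  "0 < z \<Longrightarrow> z < N \<Longrightarrow> step N z True = z + 1"
  "0 < z \<Longrightarrow> z < N \<Longrightarrow> step N z False = z - 1"
  by (simp_all add: step_def)

lemma rw_Suc_Cons: "rw N z (b ## \<omega>) (Suc n) = rw N (step N z b) \<omega> n"
  by (induction n) (auto simp: step_def Let_def)

lemma rw_absorbed:
  assumes "rw N z \<omega> n \<in> {0, N}" "n \<le> k"
  shows "rw N z \<omega> k = rw N z \<omega> n"
proof -
  have "rw N z \<omega> (n + m) = rw N z \<omega> n" for m
    using assms(1) by (induction m) (auto simp: Let_def)
  then show ?thesis
    using assms(2) le_Suc_ex by blast
qed

lemma rw_from_boundary [simp]: "rw N 0 \<omega> n = 0" "rw N N \<omega> n = N"
  using rw_absorbed[of N 0 \<omega> 0 n] rw_absorbed[of N N \<omega> 0 n] by simp_all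

definition reaches :: "nat \<Rightarrow> nat set \<Rightarrow> nat \<Rightarrow> bool stream \<Rightarrow> bool" where
  "reaches N K z \<omega> \<longleftrightarrow> (\<exists>n. rw N z \<omega> n \<in> K)"

definition visit_count :: "nat \<Rightarrow> nat \<Rightarrow> bool stream \<Rightarrow> nat \<Rightarrow> nat" where
  "visit_count N z \<omega> y = card {k. rw N z \<omega> k = y}"

lemma reaches_Cons: "reaches N K z (b ## \<omega>) \<longleftrightarrow> z \<in> K \<or> reaches N K (step N z b) \<omega>"
  unfolding reaches_def by (metis rw.simps(1) rw_Suc_Cons not0_implies_Suc)

lemma reaches_Cons_interior:
  "0 < z \<Longrightarrow> z < N \<Longrightarrow> K \<subseteq> {0, N} \<Longrightarrow> reaches N K z (b ## \<omega>) \<longleftrightarrow> reaches N K (step N z b) \<omega>"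
  using reaches_Cons[of N K z b \<omega>] by auto

lemma visit_set_Cons:
  "{k. rw N z (b ## \<omega>) k = y} = (if z = y then {0} else {}) \<union> Suc ` {k. rw N (step N z b) \<omega> k = y}"
  (is "?lhs = ?rhs")
proof (intro set_eqI)
  fix k show "k \<in> ?lhs \<longleftrightarrow> k \<in> ?rhs"
    by (cases k) (auto simp: rw_Suc_Cons simp del: rw.simps(2))
qed

lemma finite_visits_if_absorbed:
  assumes "reaches N K z \<omega>" "K \<subseteq> {0, N}" "0 < y" "y < N"
  shows "finite {k. rw N z \<omega> k = y}"
proof -
  obtain n where n: "rw N z \<omega> n \<in> K"
    using assms(1) by (auto simp: reaches_def)
  have "k < n" if "rw N z \<omega> k = y" for k
  proof (rule ccontr)
    assume "\<not> k < n"
    then have "rw N z \<omega> k \<in> K"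
      using rw_absorbed[of N z \<omega> n k] n assms(2) by auto
    then show False
      using that assms(2-4) by auto
  qed
  then have "{k. rw N z \<omega> k = y} \<subseteq> {..<n}"
    by blast
  then show ?thesis
    using finite_subset by blast
qed

lemma visit_count_Cons_other:
  "z \<noteq> y \<Longrightarrow> visit_count N z (b ## \<omega>) y = visit_count N (step N z b) \<omega> y"
  by (simp add: visit_count_def visit_set_Cons card_image)

lemma visit_count_Cons_self:
  assumes "finite {k. rw N (step N y b) \<omega> k = y}"
  shows "visit_count N y (b ## \<omega>) y = Suc (visit_count N (step N y b) \<omega> y)"
  using assms by (simp add: visit_count_def visit_set_Cons card_image image_iff)

lemma odd_visit_count_imp_reaches:
  assumes "odd (visit_count N x \<omega> y)"
  shows "reaches N {y} x \<omega>"
proof -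
  have "{k. rw N x \<omega> k = y} \<noteq> {}"
    by (metis assms card.empty even_zero visit_count_def)
  then show ?thesis
    by (auto simp: reaches_def)
qed

section \<open>Measurability and first-step analysis\<close>

lemma measurable_rw [measurable]:
  "(\<lambda>\<omega>. rw N z \<omega> n) \<in> measurable (walk_space p) (count_space UNIV)"
  unfolding walk_space_def
proof (induction n)
  case (Suc n)
  note Suc [measurable]
  show ?case by (simp add: Let_def) measurable
qed simp

lemma pred_reaches [measurable]: "Measurable.pred (walk_space p) (reaches N K z)"
  unfolding reaches_def by measurable

lemma pred_odd_card:
  fixes P :: "'a \<Rightarrow> nat \<Rightarrow> bool"
  assumes [measurable]: "\<And>k. Measurable.pred M (\<lambda>\<omega>. P \<omega> k)"
  shows "Measurable.pred M (\<lambda>\<omega>. odd (card {k. P \<omega> k}))"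
proof -
  \<comment> \<open>Finite sets of naturals are enumerated by lists, which form a countable type.\<close>
  have "odd (card {k. P \<omega> k}) \<longleftrightarrow>
      (\<exists>xs. odd (card (set xs)) \<and> (\<forall>k. P \<omega> k \<longleftrightarrow> k \<in> set xs))" for \<omega>
    by (metis card.infinite even_zero finite_list mem_Collect_eq set_eqI)
  then show ?thesis by measurable
qed

lemma pred_odd_visit_count [measurable]:
  "Measurable.pred (walk_space p) (\<lambda>\<omega>. odd (visit_count N z \<omega> y))"
  unfolding visit_count_def by (rule pred_odd_card) measurable

lemma prob_of_not_conj:
  assumes "prob_space M" and [measurable]: "Measurable.pred M Q" "Measurable.pred M A"
  shows "prob_of M (\<lambda>\<omega>. \<not> Q \<omega> \<and> A \<omega>) = prob_of M A - prob_of M (\<lambda>\<omega>. Q \<omega> \<and> A \<omega>)"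
proof -
  interpret prob_space M by fact
  have "{\<omega>\<in>space M. \<not> Q \<omega> \<and> A \<omega>} = {\<omega>\<in>space M. A \<omega>} - {\<omega>\<in>space M. Q \<omega> \<and> A \<omega>}"
    by auto
  then show ?thesis
    unfolding prob_of_def by (simp add: finite_measure_Diff subset_iff)
qed

lemma prob_of_conj_almost_sure:
  assumes "prob_space M" and [measurable]: "Measurable.pred M Q" "Measurable.pred M A"
    and "prob_of M A = 1"
  shows "prob_of M (\<lambda>\<omega>. Q \<omega> \<and> A \<omega>) = prob_of M Q"
proof -
  interpret prob_space M by fact
  have "AE \<omega> in M. A \<omega>"
    using assms(4) by (simp add: prob_of_def prob_Collect_eq_1)
  then show ?thesis
    unfolding prob_of_def by (intro prob_eq_AE) auto
qed

lemma prob_space_walk_space: "prob_space (walk_space p)"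
  unfolding walk_space_def
  by (rule prob_space.prob_space_stream_space) (rule prob_space_measure_pmf)

lemma space_walk_space [simp]: "space (walk_space p) = UNIV"
  by (simp add: walk_space_def space_stream_space)

lemma prob_of_first_step:
  assumes "0 \<le> p" "p \<le> 1" and [measurable]: "Measurable.pred (walk_space p) Q"
  shows "prob_of (walk_space p) Q =
    p * prob_of (walk_space p) (\<lambda>\<omega>. Q (True ## \<omega>))
    + (1 - p) * prob_of (walk_space p) (\<lambda>\<omega>. Q (False ## \<omega>))"
    (is "?P Q = p * ?P ?QT + (1 - p) * ?P ?QF")
proof -
  have "ennreal (?P Q) = ennreal (?P ?QT) * p + ennreal (?P ?QF) * (1 - p)"
    using prob_space.prob_stream_space[OF prob_space_measure_pmf, of "bernoulli_pmf p" Q] assms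
    unfolding prob_of_def walk_space_def by simp
  also have "\<dots> = ennreal (p * ?P ?QT + (1 - p) * ?P ?QF)"
    using assms by (simp add: prob_of_def ennreal_plus ennreal_mult' mult.commute)
  finally show ?thesis
    by (rule ennreal_inj[THEN iffD1, rotated 2]) (use assms in \<open>simp_all add: prob_of_def\<close>)
qed

section \<open>Harmonic functions and the scale function\<close>

definition walk_scale :: "real \<Rightarrow> nat \<Rightarrow> real" where
  "walk_scale \<rho> k = (\<Sum>j<k. \<rho> ^ j)"

lemma walk_scale_0 [simp]: "walk_scale \<rho> 0 = 0"
  and walk_scale_1 [simp]: "walk_scale \<rho> (Suc 0) = 1"
  and walk_scale_Suc: "walk_scale \<rho> (Suc k) = walk_scale \<rho> k + \<rho> ^ k"
  by (simp_all add: walk_scale_def)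

lemma walk_scale_mono: "0 \<le> \<rho> \<Longrightarrow> m \<le> k \<Longrightarrow> walk_scale \<rho> m \<le> walk_scale \<rho> k"
  unfolding walk_scale_def by (rule sum_mono2) auto

lemma walk_scale_strict_mono: "walk_scale \<rho> m < walk_scale \<rho> k" if "0 < \<rho>" "m < k"
proof -
  have "walk_scale \<rho> m + \<rho> ^ m \<le> walk_scale \<rho> k"
    using walk_scale_mono[of \<rho> "Suc m" k] that by (simp add: walk_scale_Suc)
  moreover have "0 < \<rho> ^ m"
    using that by simp
  ultimately show ?thesis
    by linarith
qed

lemma one_le_walk_scale: "0 \<le> \<rho> \<Longrightarrow> 0 < k \<Longrightarrow> 1 \<le> walk_scale \<rho> k"
  using walk_scale_mono[of \<rho> 1 k] by (simp add: walk_scale_Suc)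

context
  fixes p :: real and g :: "nat \<Rightarrow> real" and a b :: nat
  assumes p_pos: "0 < p"
    and harmonic: "\<And>z. a < z \<Longrightarrow> z < b \<Longrightarrow> g z = p * g (z + 1) + (1 - p) * g (z - 1)"
begin

lemma harmonic_increment:
  "a + d < b \<Longrightarrow> g (a + d + 1) - g (a + d) = ((1 - p) / p) ^ d * (g (a + 1) - g a)"
proof (induction d)
  case (Suc d)
  have "p * (g (a + d + 2) - g (a + d + 1)) = (1 - p) * (g (a + d + 1) - g (a + d))"
    using harmonic[of "a + d + 1"] Suc.prems by (simp add: algebra_simps)
  then have "g (a + d + 2) - g (a + d + 1) = (1 - p) / p * (g (a + d + 1) - g (a + d))"
    using p_pos by (simp add: field_simps)
  also have "\<dots> = ((1 - p) / p) ^ Suc d * (g (a + 1) - g a)"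
    using Suc by simp
  finally show ?case
    by simp
qed simp

lemma harmonic_walk_scale:
  "a + d \<le> b \<Longrightarrow> g (a + d) = g a + (g (a + 1) - g a) * walk_scale ((1 - p) / p) d"
proof (induction d)
  case (Suc d)
  then show ?case
    using harmonic_increment[of d] by (simp add: walk_scale_Suc algebra_simps)
qed simp

lemma harmonic_interpolation:
  assumes "p \<le> 1" "a < b" "a \<le> z" "z \<le> b"
  shows "g z = g a + (g b - g a) * walk_scale ((1 - p) / p) (z - a) / walk_scale ((1 - p) / p) (b - a)"
proof -
  have "1 \<le> walk_scale ((1 - p) / p) (b - a)"
    using assms p_pos by (intro one_le_walk_scale) auto
  moreover have "g b = g a + (g (a + 1) - g a) * walk_scale ((1 - p) / p) (b - a)"
    using harmonic_walk_scale[of "b - a"] assms by simp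
  ultimately have "g (a + 1) - g a = (g b - g a) / walk_scale ((1 - p) / p) (b - a)"
    by (simp add: field_simps)
  then show ?thesis
    using harmonic_walk_scale[of "z - a"] assms by simp
qed

end

section \<open>Hitting times\<close>

lemma hit_le:
  assumes "rw N x \<omega> k = a" "0 < k"
  shows "hit N x \<omega> a \<le> enat k"
proof -
  have "\<exists>n\<ge>1. rw N x \<omega> n = a"
    using assms by (intro exI[of _ k]) auto
  then show ?thesis
    using assms by (auto simp: hit_def intro: Least_le)
qed

lemma hit_finite_iff_reaches:
  assumes "a \<noteq> x"
  shows "hit N x \<omega> a \<noteq> \<infinity> \<longleftrightarrow> reaches N {a} x \<omega>"
proof -
  have "(\<exists>n\<ge>1. rw N x \<omega> n = a) \<longleftrightarrow> (\<exists>n. rw N x \<omega> n = a)"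
    using assms by (metis gr0I less_one rw.simps(1) not_less)
  then show ?thesis
    by (simp add: hit_def reaches_def)
qed

lemma less_hit_boundary:
  assumes "rw N x \<omega> k = y" "y \<notin> {0, N}" "a \<in> {0, N}"
  shows "enat k < hit N x \<omega> a"
proof (cases "\<exists>n\<ge>1. rw N x \<omega> n = a")
  case True
  define m where "m = (LEAST n. n \<ge> 1 \<and> rw N x \<omega> n = a)"
  have m: "rw N x \<omega> m = a"
    using LeastI_ex[OF True] by (simp add: m_def)
  have "k < m"
    using rw_absorbed[of N x \<omega> m k] m assms by (cases "m \<le> k") auto
  then show ?thesis
    using True by (simp add: hit_def m_def)
qed (auto simp: hit_def)

lemma hit_other_boundary:
  assumes "reaches N {b} x \<omega>" "a \<in> {0, N}" "b \<in> {0, N}" "a \<noteq> b"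
  shows "hit N x \<omega> a = \<infinity>"
proof (rule ccontr)
  assume "hit N x \<omega> a \<noteq> \<infinity>"
  then obtain n where n: "rw N x \<omega> n = a"
    by (auto simp: hit_def split: if_splits)
  obtain m where m: "rw N x \<omega> m = b"
    using assms(1) by (auto simp: reaches_def)
  show False
    using rw_absorbed[of N x \<omega> n m] rw_absorbed[of N x \<omega> m n] n m assms(2-4)
    by (cases "n \<le> m") auto
qed

lemma hit_interior_less_hit_boundary:
  assumes "reaches N {y} x \<omega>" "x \<noteq> y" "y \<notin> {0, N}" "a \<in> {0, N}"
  shows "hit N x \<omega> y < hit N x \<omega> a"
proof -
  obtain k where k: "rw N x \<omega> k = y"
    using assms(1) by (auto simp: reaches_def)
  moreover have "0 < k"
    using k assms(2) by (cases k) auto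
  ultimately show ?thesis
    using hit_le less_hit_boundary[OF k assms(3,4)] le_less_trans by blast
qed

lemma visits_eq_visit_count:
  assumes "y \<notin> {0, N}"
  shows "visits N x \<omega> y = visit_count N x \<omega> y"
proof -
  have "enat k \<le> exit_time N x \<omega>" if "rw N x \<omega> k = y" for k
    using less_hit_boundary[OF that assms] by (simp add: exit_time_def order_less_imp_le)
  then show ?thesis
    unfolding visits_def visit_count_def by (intro arg_cong[where f = card] Collect_cong) auto
qed

lemma hit_before_exit_iff:
  assumes "x \<noteq> y" "y \<notin> {0, N}"
  shows "hit N x \<omega> y < exit_time N x \<omega> \<longleftrightarrow> reaches N {y} x \<omega>"
proof
  assume "hit N x \<omega> y < exit_time N x \<omega>"
  then have "hit N x \<omega> y \<noteq> \<infinity>"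
    by (metis enat_ord_simps(6))
  then show "reaches N {y} x \<omega>"
    using hit_finite_iff_reaches[OF assms(1)[symmetric]] by blast
qed (use hit_interior_less_hit_boundary[OF _ assms] in \<open>simp add: exit_time_def\<close>)

lemma hit_then_boundary_iff:
  assumes "x \<notin> {0, N}" "x \<noteq> y" "y \<notin> {0, N}" "a \<in> {0, N}" "b \<in> {0, N}" "a \<noteq> b"
  shows "hit N x \<omega> y < hit N x \<omega> a \<and> hit N x \<omega> a < hit N x \<omega> b \<longleftrightarrow>
    reaches N {y} x \<omega> \<and> reaches N {a} x \<omega>"
proof
  assume "hit N x \<omega> y < hit N x \<omega> a \<and> hit N x \<omega> a < hit N x \<omega> b"
  then have "hit N x \<omega> y \<noteq> \<infinity>" "hit N x \<omega> a \<noteq> \<infinity>"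
    by (metis enat_ord_simps(6))+
  then show "reaches N {y} x \<omega> \<and> reaches N {a} x \<omega>"
    using hit_finite_iff_reaches assms(1,2,4) by (metis insertCI)
next
  assume reach: "reaches N {y} x \<omega> \<and> reaches N {a} x \<omega>"
  then have "hit N x \<omega> a \<noteq> \<infinity>"
    using hit_finite_iff_reaches assms(1,4) by (metis insertCI)
  then show "hit N x \<omega> y < hit N x \<omega> a \<and> hit N x \<omega> a < hit N x \<omega> b"
    using reach hit_interior_less_hit_boundary[OF _ assms(2-4)]
      hit_other_boundary[OF _ assms(5,4) assms(6)[symmetric]]
    by simp
qed

section \<open>The walk with a target site\<close>

locale walk_target =
  fixes p :: real and N y :: nat
  assumes p_pos: "0 < p" and p_le_1: "p \<le> 1" and y_pos: "0 < y" and y_less: "y < N"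
begin

definition q :: real where "q = 1 - p"

definition \<rho> :: real where "\<rho> = q / p"

abbreviation Pr :: "(bool stream \<Rightarrow> bool) \<Rightarrow> real" where
  "Pr \<equiv> prob_of (walk_space p)"

lemma q_nonneg: "0 \<le> q"
  using p_le_1 by (simp add: q_def)

lemma \<rho>_nonneg: "0 \<le> \<rho>"
  using p_pos q_nonneg by (simp add: \<rho>_def)

lemma \<rho>_pos_iff: "0 < \<rho> \<longleftrightarrow> 0 < q"
  using p_pos by (simp add: \<rho>_def zero_less_divide_iff)

definition harmonic_off_target :: "(nat \<Rightarrow> real) \<Rightarrow> bool" where
  "harmonic_off_target g \<longleftrightarrow> (\<forall>z. 0 < z \<longrightarrow> z < N \<longrightarrow> z \<noteq> y \<longrightarrow> g z = p * g (z + 1) + q * g (z - 1))"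

text \<open>\<open>tent z\<close> is the probability of reaching \<open>y\<close> from \<open>z\<close> before exiting.\<close>
definition tent :: "nat \<Rightarrow> real" where
  "tent z = (if z \<le> y then walk_scale \<rho> z / walk_scale \<rho> y
             else 1 - walk_scale \<rho> (z - y) / walk_scale \<rho> (N - y))"

text \<open>The probability of returning to \<open>y\<close> before exiting.\<close>
definition return_prob :: real where
  "return_prob = p * tent (y + 1) + q * tent (y - 1)"

lemma harmonic_off_target_eq_tent:
  assumes "harmonic_off_target g" "g 0 = 0" "g N = 0" "z \<le> N"
  shows "g z = g y * tent z"
proof (cases "z \<le> y")
  case True
  have "g z = g 0 + (g y - g 0) * walk_scale ((1 - p) / p) (z - 0) / walk_scale ((1 - p) / p) (y - 0)"
    using assms(1) True y_pos y_less p_pos p_le_1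
    by (intro harmonic_interpolation) (auto simp: harmonic_off_target_def q_def)
  then show ?thesis
    using True assms(2) by (simp add: tent_def \<rho>_def q_def)
next
  case False
  have "g z = g y + (g N - g y) * walk_scale ((1 - p) / p) (z - y) / walk_scale ((1 - p) / p) (N - y)"
    using assms(1,4) False y_pos y_less p_pos p_le_1
    by (intro harmonic_interpolation) (auto simp: harmonic_off_target_def q_def)
  then show ?thesis
    using False assms(3) by (simp add: tent_def \<rho>_def q_def algebra_simps)
qed

lemma walk_scale_target_pos: "0 < walk_scale \<rho> y" "0 < walk_scale \<rho> (N - y)"
  using one_le_walk_scale[OF \<rho>_nonneg, of y] one_le_walk_scale[OF \<rho>_nonneg, of "N - y"] y_pos y_less
  by auto

lemma tent_bounds: "z \<le> N \<Longrightarrow> 0 \<le> tent z" "tent z \<le> 1"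
  using walk_scale_target_pos walk_scale_mono[OF \<rho>_nonneg, of z y]
    walk_scale_mono[OF \<rho>_nonneg, of "z - y" "N - y"] walk_scale_mono[OF \<rho>_nonneg, of 0]
  by (auto simp: tent_def)

lemma tent_pos:
  assumes "0 < z" "z < N" "z \<le> y \<or> 0 < q"
  shows "0 < tent z"
proof (cases "z \<le> y")
  case True
  then show ?thesis
    using one_le_walk_scale[OF \<rho>_nonneg, of z] walk_scale_target_pos assms by (simp add: tent_def)
next
  case False
  then have "walk_scale \<rho> (z - y) < walk_scale \<rho> (N - y)"
    using assms \<rho>_pos_iff by (intro walk_scale_strict_mono) auto
  then show ?thesis
    using False walk_scale_target_pos by (simp add: tent_def)
qed

lemma tent_neighbours:
  "tent (y + 1) = 1 - 1 / walk_scale \<rho> (N - y)"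
  "tent (y - 1) = walk_scale \<rho> (y - 1) / walk_scale \<rho> y"
  by (simp_all add: tent_def)

lemma return_prob_bounds: "0 \<le> return_prob" "return_prob \<le> 1"
proof -
  have "0 \<le> tent (y + 1)" "0 \<le> tent (y - 1)"
    using tent_bounds(1) y_less by auto
  then show "0 \<le> return_prob"
    using p_pos q_nonneg by (simp add: return_prob_def)
  have "p * tent (y + 1) \<le> p" "q * tent (y - 1) \<le> q"
    using tent_bounds(2) p_pos q_nonneg by (simp_all add: mult_left_le)
  then show "return_prob \<le> 1"
    by (simp add: return_prob_def q_def)
qed

lemma Pr_first_step:
  assumes [measurable]: "\<And>z. Measurable.pred (walk_space p) (F z)"
    and "0 < z" "z < N" and shift: "\<And>b \<omega>. F z (b ## \<omega>) = F (step N z b) \<omega>"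
  shows "Pr (F z) = p * Pr (F (z + 1)) + q * Pr (F (z - 1))"
  using prob_of_first_step[of p "F z"] p_pos p_le_1 assms(2,3) by (simp add: q_def shift)

lemma harmonic_off_target_Pr:
  assumes "\<And>z. Measurable.pred (walk_space p) (F z)"
    and "\<And>z b \<omega>. 0 < z \<Longrightarrow> z < N \<Longrightarrow> z \<noteq> y \<Longrightarrow> F z (b ## \<omega>) = F (step N z b) \<omega>"
  shows "harmonic_off_target (\<lambda>z. Pr (F z))"
  unfolding harmonic_off_target_def using assms by (blast intro: Pr_first_step)

definition absorb_prob :: "nat set \<Rightarrow> nat \<Rightarrow> real" where
  "absorb_prob K z = Pr (reaches N K z)"

definition odd_absorb_prob :: "nat set \<Rightarrow> nat \<Rightarrow> real" where
  "odd_absorb_prob K z = Pr (\<lambda>\<omega>. odd (visit_count N z \<omega> y) \<and> reaches N K z \<omega>)"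

definition hit_absorb_prob :: "nat set \<Rightarrow> nat \<Rightarrow> real" where
  "hit_absorb_prob K z = Pr (\<lambda>\<omega>. reaches N {y} z \<omega> \<and> reaches N K z \<omega>)"

lemma absorb_prob_boundary:
  "absorb_prob K 0 = (if 0 \<in> K then 1 else 0)" "absorb_prob K N = (if N \<in> K then 1 else 0)"
  using prob_space.prob_space[OF prob_space_walk_space, of p]
  by (simp_all add: absorb_prob_def reaches_def prob_of_def)

context
  fixes K assumes K_boundary: "K \<subseteq> {0, N}"
begin

lemma absorb_prob_harmonic:
  "0 < z \<Longrightarrow> z < N \<Longrightarrow> absorb_prob K z = p * absorb_prob K (z + 1) + q * absorb_prob K (z - 1)"
  unfolding absorb_prob_def using K_boundary by (intro Pr_first_step) (auto simp: reaches_Cons_interior)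

lemma absorb_prob_eq:
  assumes "z \<le> N"
  shows "absorb_prob K z =
    absorb_prob K 0 + (absorb_prob K N - absorb_prob K 0) * walk_scale \<rho> z / walk_scale \<rho> N"
  using harmonic_interpolation[of p 0 N "absorb_prob K" z] absorb_prob_harmonic assms p_pos p_le_1 y_less
  by (simp add: \<rho>_def q_def)

lemma harmonic_off_target_odd_absorb_prob: "harmonic_off_target (odd_absorb_prob K)"
  unfolding odd_absorb_prob_def[abs_def] using K_boundary
  by (intro harmonic_off_target_Pr) (auto simp: visit_count_Cons_other reaches_Cons_interior)

lemma harmonic_off_target_hit_absorb_prob: "harmonic_off_target (hit_absorb_prob K)"
  unfolding hit_absorb_prob_def[abs_def] using K_boundary
  by (intro harmonic_off_target_Pr) (auto simp: reaches_Cons[of N "{y}"] reaches_Cons_interior)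

lemma odd_absorb_prob_eq_tent: "z \<le> N \<Longrightarrow> odd_absorb_prob K z = odd_absorb_prob K y * tent z"
  using y_pos y_less
  by (intro harmonic_off_target_eq_tent harmonic_off_target_odd_absorb_prob)
    (auto simp: odd_absorb_prob_def visit_count_def prob_of_def)

lemma hit_absorb_prob_eq_tent: "z \<le> N \<Longrightarrow> hit_absorb_prob K z = hit_absorb_prob K y * tent z"
  using y_pos y_less
  by (intro harmonic_off_target_eq_tent harmonic_off_target_hit_absorb_prob)
    (auto simp: hit_absorb_prob_def reaches_def prob_of_def)

lemma hit_absorb_prob_target: "hit_absorb_prob K y = absorb_prob K y"
proof -
  have "reaches N {y} y \<omega>" for \<omega>
    by (auto simp: reaches_def intro: exI[of _ 0])
  then show ?thesis
    by (simp add: hit_absorb_prob_def absorb_prob_def)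
qed

lemma odd_absorb_prob_target: "odd_absorb_prob K y * (1 + return_prob) = absorb_prob K y"
proof -
  \<comment> \<open>The visit at time \<open>0\<close> flips the parity of the number of later visits.\<close>
  have flip: "odd (visit_count N y (b ## \<omega>) y) \<and> reaches N K y (b ## \<omega>) \<longleftrightarrow>
      \<not> odd (visit_count N (step N y b) \<omega> y) \<and> reaches N K (step N y b) \<omega>" for b \<omega>
    using finite_visits_if_absorbed[OF _ K_boundary y_pos y_less, of "step N y b" \<omega>]
      visit_count_Cons_self reaches_Cons_interior[OF y_pos y_less K_boundary] by auto
  have "odd_absorb_prob K y =
      p * Pr (\<lambda>\<omega>. \<not> odd (visit_count N (y + 1) \<omega> y) \<and> reaches N K (y + 1) \<omega>)
      + q * Pr (\<lambda>\<omega>. \<not> odd (visit_count N (y - 1) \<omega> y) \<and> reaches N K (y - 1) \<omega>)"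
    using prob_of_first_step[of p] p_pos p_le_1 y_pos y_less
    by (simp add: odd_absorb_prob_def flip q_def)
  also have "\<dots> = p * (absorb_prob K (y + 1) - odd_absorb_prob K (y + 1))
      + q * (absorb_prob K (y - 1) - odd_absorb_prob K (y - 1))"
    unfolding absorb_prob_def odd_absorb_prob_def
    by (subst (1 2) prob_of_not_conj[OF prob_space_walk_space]) simp_all
  also have "\<dots> = absorb_prob K y - return_prob * odd_absorb_prob K y"
    using absorb_prob_harmonic[OF y_pos y_less] odd_absorb_prob_eq_tent[of "y + 1"]
      odd_absorb_prob_eq_tent[of "y - 1"] y_less
    by (simp add: return_prob_def algebra_simps)
  finally show ?thesis
    by (simp add: algebra_simps)
qed

lemma odd_hit_ratio:
  assumes "x \<le> N" "0 < tent x" "0 < absorb_prob K y"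
  shows "odd_absorb_prob K x / hit_absorb_prob K x = 1 / (1 + return_prob)"
  using odd_absorb_prob_eq_tent[OF assms(1)] hit_absorb_prob_eq_tent[OF assms(1)]
    odd_absorb_prob_target hit_absorb_prob_target assms(2,3) return_prob_bounds(1)
  by (simp add: field_simps)

end

lemma absorb_prob_both: "z \<le> N \<Longrightarrow> absorb_prob {0, N} z = 1"
  using absorb_prob_eq[of "{0, N}" z] by (simp add: absorb_prob_boundary)

lemma absorb_prob_target_pos:
  assumes "K \<subseteq> {0, N}" "K \<noteq> {}" "0 < q"
  shows "0 < absorb_prob K y"
proof -
  define s where "s = walk_scale \<rho> y / walk_scale \<rho> N"
  have "walk_scale \<rho> y < walk_scale \<rho> N"
    using assms(3) y_less \<rho>_pos_iff by (intro walk_scale_strict_mono) auto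
  then have "0 < s" "s < 1"
    using walk_scale_target_pos(1) by (simp_all add: s_def)
  moreover have "absorb_prob K y = absorb_prob K 0 * (1 - s) + absorb_prob K N * s"
    using absorb_prob_eq[OF assms(1), of y] y_less by (simp add: s_def algebra_simps diff_divide_distrib)
  ultimately show ?thesis
    using assms(1,2) y_less by (auto simp: absorb_prob_boundary)
qed

lemma one_minus_return_prob_le:
  assumes "\<rho> \<le> 1"
  shows "1 - return_prob \<le> 1 / walk_scale \<rho> (N - y) + 1 / walk_scale \<rho> y"
proof -
  have "1 - tent (y - 1) = \<rho> ^ (y - 1) / walk_scale \<rho> y"
    unfolding tent_neighbours using walk_scale_Suc[of \<rho> "y - 1"] walk_scale_target_pos y_pos
    by (simp add: field_simps)
  also have "\<dots> \<le> 1 / walk_scale \<rho> y"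
    using walk_scale_target_pos assms \<rho>_nonneg by (intro divide_right_mono power_le_one) auto
  finally have "q * (1 - tent (y - 1)) \<le> 1 / walk_scale \<rho> y"
    using tent_bounds(2) q_nonneg p_pos by (smt (verit) mult_left_le_one_le q_def)
  moreover have "p * (1 - tent (y + 1)) \<le> 1 / walk_scale \<rho> (N - y)"
    unfolding tent_neighbours using p_le_1 p_pos walk_scale_target_pos
    by (simp add: divide_right_mono)
  ultimately show ?thesis
    by (simp add: return_prob_def q_def algebra_simps)
qed

lemma visits_target: "visits N x \<omega> y = visit_count N x \<omega> y"
  using visits_eq_visit_count y_pos y_less by simp

lemma prob_odd_visits: "x \<le> N \<Longrightarrow> Pr (\<lambda>\<omega>. odd (visits N x \<omega> y)) = odd_absorb_prob {0, N} x"
  unfolding odd_absorb_prob_def visits_target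
  by (rule prob_of_conj_almost_sure[OF prob_space_walk_space, symmetric])
    (simp_all add: absorb_prob_both[unfolded absorb_prob_def])

lemma cond_prob_odd_given_hit_before_exit:
  assumes "0 < x" "x < N" "x \<noteq> y"
  shows "walk_cond_prob (walk_space p) (\<lambda>\<omega>. odd (visits N x \<omega> y))
      (\<lambda>\<omega>. hit N x \<omega> y < exit_time N x \<omega>) = odd_absorb_prob {0, N} x / hit_absorb_prob {0, N} x"
proof -
  have hit: "hit N x \<omega> y < exit_time N x \<omega> \<longleftrightarrow> reaches N {y} x \<omega>" for \<omega>
    using hit_before_exit_iff assms(3) y_pos y_less by simp
  have "hit_absorb_prob {0, N} x = Pr (reaches N {y} x)"
    unfolding hit_absorb_prob_def
    by (rule prob_of_conj_almost_sure[OF prob_space_walk_space])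
      (use assms(2) absorb_prob_both[unfolded absorb_prob_def] in simp_all)
  moreover have "(\<lambda>\<omega>. odd (visits N x \<omega> y) \<and> hit N x \<omega> y < exit_time N x \<omega>) =
      (\<lambda>\<omega>. odd (visits N x \<omega> y))"
    by (auto simp: hit visits_target dest: odd_visit_count_imp_reaches)
  ultimately show ?thesis
    using prob_odd_visits[of x] assms(2) by (simp add: walk_cond_prob_def hit)
qed

lemma cond_prob_odd_given_hit_then_boundary:
  assumes "0 < x" "x < N" "x \<noteq> y" "a \<in> {0, N}" "b \<in> {0, N}" "a \<noteq> b"
  shows "walk_cond_prob (walk_space p) (\<lambda>\<omega>. odd (visits N x \<omega> y))
      (\<lambda>\<omega>. hit N x \<omega> y < hit N x \<omega> a \<and> hit N x \<omega> a < hit N x \<omega> b)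
    = odd_absorb_prob {a} x / hit_absorb_prob {a} x"
proof -
  have hit: "hit N x \<omega> y < hit N x \<omega> a \<and> hit N x \<omega> a < hit N x \<omega> b \<longleftrightarrow>
      reaches N {y} x \<omega> \<and> reaches N {a} x \<omega>" for \<omega>
    using hit_then_boundary_iff assms y_pos y_less by simp
  show ?thesis
    unfolding walk_cond_prob_def odd_absorb_prob_def hit_absorb_prob_def hit visits_target
    by (metis odd_visit_count_imp_reaches)
qed

lemma cond_prob_odd_visits:
  assumes "0 < x" "x < N" "x \<noteq> y" "0 < q"
  shows
    "walk_cond_prob (walk_space p) (\<lambda>\<omega>. odd (visits N x \<omega> y))
      (\<lambda>\<omega>. hit N x \<omega> y < hit N x \<omega> N \<and> hit N x \<omega> N < hit N x \<omega> 0) = 1 / (1 + return_prob)"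
    "walk_cond_prob (walk_space p) (\<lambda>\<omega>. odd (visits N x \<omega> y))
      (\<lambda>\<omega>. hit N x \<omega> y < hit N x \<omega> 0 \<and> hit N x \<omega> 0 < hit N x \<omega> N) = 1 / (1 + return_prob)"
    "walk_cond_prob (walk_space p) (\<lambda>\<omega>. odd (visits N x \<omega> y))
      (\<lambda>\<omega>. hit N x \<omega> y < exit_time N x \<omega>) = 1 / (1 + return_prob)"
proof -
  have ratio: "odd_absorb_prob K x / hit_absorb_prob K x = 1 / (1 + return_prob)"
    if "K \<subseteq> {0, N}" "K \<noteq> {}" for K
    using odd_hit_ratio[OF that(1)] absorb_prob_target_pos[OF that assms(4)] tent_pos assms
    by simp
  show "walk_cond_prob (walk_space p) (\<lambda>\<omega>. odd (visits N x \<omega> y))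
      (\<lambda>\<omega>. hit N x \<omega> y < hit N x \<omega> N \<and> hit N x \<omega> N < hit N x \<omega> 0) = 1 / (1 + return_prob)"
    using cond_prob_odd_given_hit_then_boundary[of x N 0] ratio[of "{N}"] assms y_less by simp
  show "walk_cond_prob (walk_space p) (\<lambda>\<omega>. odd (visits N x \<omega> y))
      (\<lambda>\<omega>. hit N x \<omega> y < hit N x \<omega> 0 \<and> hit N x \<omega> 0 < hit N x \<omega> N) = 1 / (1 + return_prob)"
    using cond_prob_odd_given_hit_then_boundary[of x 0 N] ratio[of "{0}"] assms y_less by simp
  show "walk_cond_prob (walk_space p) (\<lambda>\<omega>. odd (visits N x \<omega> y))
      (\<lambda>\<omega>. hit N x \<omega> y < exit_time N x \<omega>) = 1 / (1 + return_prob)"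
    using cond_prob_odd_given_hit_before_exit ratio[of "{0, N}"] assms by simp
qed

lemma prob_odd_visits_eq:
  assumes "x \<le> N"
  shows "Pr (\<lambda>\<omega>. odd (visits N x \<omega> y)) = tent x / (1 + return_prob)"
  using prob_odd_visits[OF assms] odd_absorb_prob_eq_tent[of "{0, N}", OF _ assms]
    odd_absorb_prob_target[of "{0, N}"] absorb_prob_both[of y] y_less return_prob_bounds(1)
  by (simp add: field_simps)

end

section \<open>Asymptotics\<close>

lemma walk_scale_lower_bound:
  assumes "0 \<le> \<rho>" "\<rho> \<le> 1" "m \<le> k" "(1 - \<rho>) * real m \<le> 1 / 2"
  shows "real m / 2 \<le> walk_scale \<rho> k"
proof -
  have "1 / 2 \<le> \<rho> ^ m"
    using Bernoulli_inequality[of "\<rho> - 1" m] assms by (simp add: algebra_simps)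
  then have "real m / 2 \<le> real m * \<rho> ^ m"
    using mult_left_mono[of "1 / 2" "\<rho> ^ m" "real m"] by simp
  also have "\<dots> = (\<Sum>j<m. \<rho> ^ m)"
    by simp
  also have "\<dots> \<le> walk_scale \<rho> m"
    unfolding walk_scale_def using assms(1,2) by (intro sum_mono power_decreasing) auto
  also have "\<dots> \<le> walk_scale \<rho> k"
    using assms by (intro walk_scale_mono) auto
  finally show ?thesis .
qed

lemma filterlim_walk_scale_at_top:
  assumes "(\<rho> \<longlongrightarrow> 1) F" "eventually (\<lambda>n. 0 \<le> \<rho> n \<and> \<rho> n \<le> 1) F" "filterlim k at_top F"
  shows "filterlim (\<lambda>n. walk_scale (\<rho> n) (k n)) at_top F"
  unfolding filterlim_at_top
proof
  fix Z :: real
  define m where "m = nat \<lceil>2 * Z\<rceil>"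
  have "((\<lambda>n. (1 - \<rho> n) * real m) \<longlongrightarrow> (1 - 1) * real m) F"
    by (intro tendsto_intros assms(1))
  then have "eventually (\<lambda>n. (1 - \<rho> n) * real m < 1 / 2) F"
    by (intro order_tendstoD(2)) auto
  moreover have "eventually (\<lambda>n. m \<le> k n) F"
    using assms(3) by (simp add: filterlim_at_top)
  ultimately show "eventually (\<lambda>n. Z \<le> walk_scale (\<rho> n) (k n)) F"
    using assms(2)
  proof eventually_elim
    case (elim n)
    then have "real m / 2 \<le> walk_scale (\<rho> n) (k n)"
      by (intro walk_scale_lower_bound) auto
    moreover have "Z \<le> real m / 2"
      unfolding m_def by linarith
    ultimately show ?case
      by linarith
  qed
qed

lemma walk_scale_tendsto:
  assumes "0 \<le> \<rho>" "\<rho> < 1" "filterlim k at_top F"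
  shows "((\<lambda>n. walk_scale \<rho> (k n)) \<longlongrightarrow> 1 / (1 - \<rho>)) F"
proof -
  have "((\<lambda>n. (1 - \<rho> ^ k n) / (1 - \<rho>)) \<longlongrightarrow> (1 - 0) / (1 - \<rho>)) F"
    using assms by (intro tendsto_intros filterlim_compose[OF LIMSEQ_power_zero]) auto
  then show ?thesis
    using assms by (simp add: walk_scale_def sum_gp_strict)
qed

lemma ipart_bounds:
  assumes "0 \<le> a"
  shows "a * real N - 1 < real (ipart a N)" "real (ipart a N) \<le> a * real N"
  using assms by (simp_all add: ipart_def)

lemma filterlim_ipart: "0 < a \<Longrightarrow> filterlim (ipart a) at_top sequentially"
  unfolding ipart_def[abs_def]
  by (intro filterlim_compose[OF filterlim_nat_sequentially] filterlim_compose[OF filterlim_floor_sequentially]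
      filterlim_tendsto_pos_mult_at_top[OF tendsto_const] filterlim_real_sequentially)

lemma filterlim_diff_ipart:
  assumes "0 \<le> a" "a < 1"
  shows "filterlim (\<lambda>N. N - ipart a N) at_top sequentially"
proof (rule filterlim_at_top_mono[OF filterlim_ipart[of "1 - a"]])
  have "real (ipart (1 - a) N + ipart a N) \<le> real N" for N
    using ipart_bounds[of a N] ipart_bounds[of "1 - a" N] assms by (simp add: algebra_simps)
  then have "ipart (1 - a) N \<le> N - ipart a N" for N
    by (metis of_nat_le_iff add_leD2 le_diff_conv2)
  then show "eventually (\<lambda>N. ipart (1 - a) N \<le> N - ipart a N) sequentially"
    by simp
qed (use assms in simp)

lemma eventually_ipart_less:
  assumes "0 \<le> a" "a < b"
  shows "eventually (\<lambda>N. ipart a N < ipart b N) sequentially"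
proof -
  have "filterlim (\<lambda>N. (b - a) * real N) at_top sequentially"
    using assms by (intro filterlim_tendsto_pos_mult_at_top[OF tendsto_const] filterlim_real_sequentially) auto
  then have "eventually (\<lambda>N. 1 \<le> (b - a) * real N) sequentially"
    by (simp add: filterlim_at_top)
  then show ?thesis
  proof (rule eventually_mono)
    fix N assume "1 \<le> (b - a) * real N"
    then have "real (ipart a N) < real (ipart b N)"
      using ipart_bounds[of a N] ipart_bounds[of b N] assms by (simp add: algebra_simps)
    then show "ipart a N < ipart b N"
      by simp
  qed
qed

lemma eventually_ipart_interior:
  assumes "0 < a" "a < 1"
  shows "eventually (\<lambda>N. 0 < ipart a N \<and> ipart a N < N) sequentially"
proof -
  have "eventually (\<lambda>N. 1 \<le> ipart a N) sequentially" "eventually (\<lambda>N. 1 \<le> N - ipart a N) sequentially"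
    using filterlim_ipart[of a] filterlim_diff_ipart[of a] assms by (simp_all add: filterlim_at_top)
  then show ?thesis
    by eventually_elim auto
qed

lemma cond_prob_odd_visits_tendsto_half:
  fixes pN :: "nat \<Rightarrow> real"
  assumes p_lim: "pN \<longlonglongrightarrow> 1 / 2" and p_ge: "eventually (\<lambda>N. 1 / 2 \<le> pN N) sequentially"
    and \<alpha>\<beta>: "0 < \<alpha>" "\<alpha> < 1" "0 < \<beta>" "\<beta> < 1" "\<alpha> \<noteq> \<beta>"
  defines "x N \<equiv> ipart \<alpha> N" and "y N \<equiv> ipart \<beta> N"
  shows "(\<lambda>N. walk_cond_prob (walk_space (pN N)) (\<lambda>\<omega>. odd (visits N (x N) \<omega> (y N)))
        (\<lambda>\<omega>. hit N (x N) \<omega> (y N) < hit N (x N) \<omega> N \<and> hit N (x N) \<omega> N < hit N (x N) \<omega> 0))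
      \<longlonglongrightarrow> 1 / 2
    \<and> (\<lambda>N. walk_cond_prob (walk_space (pN N)) (\<lambda>\<omega>. odd (visits N (x N) \<omega> (y N)))
        (\<lambda>\<omega>. hit N (x N) \<omega> (y N) < hit N (x N) \<omega> 0 \<and> hit N (x N) \<omega> 0 < hit N (x N) \<omega> N))
      \<longlonglongrightarrow> 1 / 2
    \<and> (\<lambda>N. walk_cond_prob (walk_space (pN N)) (\<lambda>\<omega>. odd (visits N (x N) \<omega> (y N)))
        (\<lambda>\<omega>. hit N (x N) \<omega> (y N) < exit_time N (x N) \<omega>))
      \<longlonglongrightarrow> 1 / 2"
proof -
  define \<rho> where "\<rho> N = (1 - pN N) / pN N" for N
  define r where "r N = walk_target.return_prob (pN N) N (y N)" for N
  define u where "u N = 1 / walk_scale (\<rho> N) (N - y N) + 1 / walk_scale (\<rho> N) (y N)" for N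
  have p_less: "eventually (\<lambda>N. pN N < 1) sequentially"
    using p_lim by (rule order_tendstoD) simp
  moreover have "eventually (\<lambda>N. x N \<noteq> y N) sequentially"
    using eventually_ipart_less[of \<alpha> \<beta>] eventually_ipart_less[of \<beta> \<alpha>] \<alpha>\<beta>
    by (cases "\<alpha> < \<beta>") (auto elim: eventually_mono simp: x_def y_def)
  ultimately have ev: "eventually (\<lambda>N. r N \<le> 1 \<and> 1 - u N \<le> r N \<and>
      walk_cond_prob (walk_space (pN N)) (\<lambda>\<omega>. odd (visits N (x N) \<omega> (y N)))
        (\<lambda>\<omega>. hit N (x N) \<omega> (y N) < hit N (x N) \<omega> N \<and> hit N (x N) \<omega> N < hit N (x N) \<omega> 0) = 1 / (1 + r N) \<and>
      walk_cond_prob (walk_space (pN N)) (\<lambda>\<omega>. odd (visits N (x N) \<omega> (y N)))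
        (\<lambda>\<omega>. hit N (x N) \<omega> (y N) < hit N (x N) \<omega> 0 \<and> hit N (x N) \<omega> 0 < hit N (x N) \<omega> N) = 1 / (1 + r N) \<and>
      walk_cond_prob (walk_space (pN N)) (\<lambda>\<omega>. odd (visits N (x N) \<omega> (y N)))
        (\<lambda>\<omega>. hit N (x N) \<omega> (y N) < exit_time N (x N) \<omega>) = 1 / (1 + r N)) sequentially"
    using p_ge eventually_ipart_interior[OF \<alpha>\<beta>(1,2)] eventually_ipart_interior[OF \<alpha>\<beta>(3,4)]
    unfolding x_def[symmetric] y_def[symmetric]
  proof eventually_elim
    case (elim N)
    interpret W: walk_target "pN N" N "y N"
      using elim by unfold_locales auto
    have "\<rho> N = W.\<rho>" "0 < W.q" "W.\<rho> \<le> 1"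
      using elim by (simp_all add: \<rho>_def W.\<rho>_def W.q_def)
    then show ?case
      using W.cond_prob_odd_visits[of "x N"] W.return_prob_bounds W.one_minus_return_prob_le elim
      by (simp add: r_def u_def)
  qed
  have "u \<longlonglongrightarrow> 0"
  proof -
    have "\<rho> \<longlonglongrightarrow> (1 - 1 / 2) / (1 / 2)"
      unfolding \<rho>_def by (intro tendsto_intros p_lim) simp
    moreover have "eventually (\<lambda>N. 0 \<le> \<rho> N \<and> \<rho> N \<le> 1) sequentially"
      using p_ge p_less by eventually_elim (simp add: \<rho>_def)
    ultimately have "(\<lambda>N. inverse (walk_scale (\<rho> N) (N - y N)) + inverse (walk_scale (\<rho> N) (y N)))
        \<longlonglongrightarrow> 0 + 0"
      using filterlim_diff_ipart[of \<beta>] filterlim_ipart[of \<beta>] \<alpha>\<beta>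
      by (intro tendsto_add tendsto_inverse_0_at_top filterlim_walk_scale_at_top) (auto simp: y_def)
    then show ?thesis
      by (simp add: u_def[abs_def] inverse_eq_divide)
  qed
  then have "r \<longlonglongrightarrow> 1"
    using ev by (intro tendsto_sandwich[of "\<lambda>N. 1 - u N" r _ "\<lambda>_. 1"])
      (auto elim: eventually_mono intro: tendsto_eq_intros)
  then have "(\<lambda>N. 1 / (1 + r N)) \<longlonglongrightarrow> 1 / 2"
    using tendsto_divide[OF tendsto_const tendsto_add[OF tendsto_const], of r 1 sequentially 1 1] by simp
  then show ?thesis
    by (intro conjI; rule Lim_transform_eventually) (use ev in \<open>auto elim: eventually_mono\<close>)
qed

lemma prob_odd_visits_tendsto:
  assumes \<alpha>\<beta>: "0 < \<alpha>" "\<alpha> < \<beta>" "\<beta> < 1" and pq: "0 \<le> q" "q < p" "p + q = 1"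
  shows "(\<lambda>N. prob_of (walk_space p) (\<lambda>\<omega>. odd (visits N (ipart \<alpha> N) \<omega> (ipart \<beta> N))))
    \<longlonglongrightarrow> 1 / (2 - (p - q))"
proof -
  define \<rho> where "\<rho> = q / p"
  have \<rho>: "0 \<le> \<rho>" "\<rho> < 1" "\<rho> * p = q"
    using pq by (auto simp: \<rho>_def)
  define S where "S k = walk_scale \<rho> k" for k
  define F where "F N = (S (ipart \<alpha> N) / S (ipart \<beta> N)) /
    (1 + (p * (1 - 1 / S (N - ipart \<beta> N)) + q * (S (ipart \<beta> N - 1) / S (ipart \<beta> N))))" for N
  have ev: "eventually (\<lambda>N. F N = prob_of (walk_space p) (\<lambda>\<omega>. odd (visits N (ipart \<alpha> N) \<omega> (ipart \<beta> N))))
      sequentially"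
    using eventually_ipart_interior[OF \<alpha>\<beta>(1) \<alpha>\<beta>(2)[THEN order.strict_trans, OF \<alpha>\<beta>(3)]]
      eventually_ipart_interior[OF \<alpha>\<beta>(1)[THEN order.strict_trans, OF \<alpha>\<beta>(2)] \<alpha>\<beta>(3)]
      eventually_ipart_less[OF less_imp_le[OF \<alpha>\<beta>(1)] \<alpha>\<beta>(2)]
  proof eventually_elim
    case (elim N)
    interpret W: walk_target p N "ipart \<beta> N"
      using elim pq by unfold_locales auto
    have "W.q = q" "W.\<rho> = \<rho>"
      using pq by (simp_all add: W.q_def W.\<rho>_def \<rho>_def)
    then show ?case
      using W.prob_odd_visits_eq[of "ipart \<alpha> N"] elim
      by (simp add: W.return_prob_def W.tent_neighbours W.tent_def F_def S_def)
  qed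
  have "F \<longlonglongrightarrow> (1 / (1 - \<rho>)) / (1 / (1 - \<rho>)) /
      (1 + (p * (1 - 1 / (1 / (1 - \<rho>))) + q * ((1 / (1 - \<rho>)) / (1 / (1 - \<rho>)))))"
    unfolding F_def S_def using \<alpha>\<beta> \<rho> pq
    by (intro tendsto_intros walk_scale_tendsto filterlim_ipart filterlim_diff_ipart
        filterlim_compose[OF filterlim_minus_const_nat_at_top filterlim_ipart])
      (auto simp: field_simps)
  also have "(1 / (1 - \<rho>)) / (1 / (1 - \<rho>)) /
      (1 + (p * (1 - 1 / (1 / (1 - \<rho>))) + q * ((1 / (1 - \<rho>)) / (1 / (1 - \<rho>))))) = 1 / (2 - (p - q))"
    using \<rho> pq by (simp add: algebra_simps)
  finally show ?thesis
    using ev by (rule Lim_transform_eventually)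
qed

theorem proposition4p3:
  fixes \<alpha> \<beta> :: real
  assumes "0 < \<alpha>" "\<alpha> < 1" "0 < \<beta>" "\<beta> < 1" "\<alpha> \<noteq> \<beta>"
  shows
    "(\<forall>c::real. c \<ge> 0 \<longrightarrow>
       ((\<lambda>N. walk_cond_prob (walk_space (1/2 + c / real N))
               (\<lambda>\<omega>. odd (visits N (ipart \<alpha> N) \<omega> (ipart \<beta> N)))
               (\<lambda>\<omega>. hit N (ipart \<alpha> N) \<omega> (ipart \<beta> N) < hit N (ipart \<alpha> N) \<omega> N
                   \<and> hit N (ipart \<alpha> N) \<omega> N < hit N (ipart \<alpha> N) \<omega> 0))
          \<longlonglongrightarrow> 1/2)
     \<and> ((\<lambda>N. walk_cond_prob (walk_space (1/2 + c / real N))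
               (\<lambda>\<omega>. odd (visits N (ipart \<alpha> N) \<omega> (ipart \<beta> N)))
               (\<lambda>\<omega>. hit N (ipart \<alpha> N) \<omega> (ipart \<beta> N) < hit N (ipart \<alpha> N) \<omega> 0
                   \<and> hit N (ipart \<alpha> N) \<omega> 0 < hit N (ipart \<alpha> N) \<omega> N))
          \<longlonglongrightarrow> 1/2)
     \<and> ((\<lambda>N. walk_cond_prob (walk_space (1/2 + c / real N))
               (\<lambda>\<omega>. odd (visits N (ipart \<alpha> N) \<omega> (ipart \<beta> N)))
               (\<lambda>\<omega>. hit N (ipart \<alpha> N) \<omega> (ipart \<beta> N) < exit_time N (ipart \<alpha> N) \<omega>))
          \<longlonglongrightarrow> 1/2))
     \<and> (\<forall>p q::real. 0 \<le> q \<longrightarrow> q < p \<longrightarrow> p + q = 1 \<longrightarrow> \<alpha> < \<beta> \<longrightarrow>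
       (\<lambda>N. prob_of (walk_space p)
               (\<lambda>\<omega>. odd (visits N (ipart \<alpha> N) \<omega> (ipart \<beta> N))))
          \<longlonglongrightarrow> 1 / (2 - (p - q)))"
proof -
  have "(\<lambda>N. 1 / 2 + c / real N) \<longlonglongrightarrow> 1 / 2" "eventually (\<lambda>N. 1 / 2 \<le> 1 / 2 + c / real N) sequentially"
    if "0 \<le> c" for c :: real
    using that by (auto intro!: tendsto_eq_intros always_eventually)
  then show ?thesis
    using cond_prob_odd_visits_tendsto_half[OF _ _ assms] prob_odd_visits_tendsto[of \<alpha> \<beta>] assms
    by simp
qed

end
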